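(* For every positive integer $n$, \[ \sum_{j=1}^{n}(-1)^j\left(\binom{n}{j}-1\right)\frac{B_j}{j}=n-H_n . \]
   Context: $B_j$ is the $j$th Bernoulli number ($\frac{t}{e^t-1}=\sum_{m\ge0}B_m\frac{t^m}{m!}$, so $B_1=-1/2$). $H_n=\sum_{i=1}^n1/i$. *)

theory Defs
  imports "HOL-Analysis.Analysis" "HOL-Computational_Algebra.Formal_Power_Series"
begin

text \<open>Bernoulli numbers defined by the exponential generating function
  t/(e^t - 1) = sum_m B_m t^m/m!, as a formal power series (so B_1 = -1/2).\<close>
definition bernoulli :: "nat \<Rightarrow> real" where
  "bernoulli m = fact m * fps_nth (fps_X / (fps_exp 1 - 1)) m"

end

theory Submission
  imports Defs
begin

text \<open>The numbers B'(k) = (-1)^k B(k) have exponential generating function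
  G(-t) = t e^t / (e^t - 1), where G(t) = t / (e^t - 1). Comparing coefficients in
  G(-t) (e^t - 1) = t e^t gives sum_{k<n} C(n,k) B'(k) = n. If S(n) denotes the left-hand
  side, Pascal's rule and C(n,j-1)/j = C(n+1,j)/(n+1) give
  S(n+1) - S(n) = (sum_{j=1..n} C(n+1,j) B'(j)) / (n+1) = 1 - 1/(n+1),
  which telescopes to n - H(n).\<close>

definition bernoulli_egf :: "'a::field_char_0 fps" where
  "bernoulli_egf = fps_X / (fps_exp 1 - 1)"

definition bernoulli' :: "nat \<Rightarrow> real" where
  "bernoulli' k = (-1) ^ k * bernoulli k"

lemma subdegree_fps_exp_minus_1:
  assumes "c \<noteq> 0"
  shows "subdegree (fps_exp c - 1 :: 'a::field_char_0 fps) = 1"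
  using assms by (intro subdegreeI) auto

lemma bernoulli_egf_times_exp_minus_1:
  "bernoulli_egf * (fps_exp 1 - 1) = (fps_X :: 'a::field_char_0 fps)"
proof -
  have "fps_exp 1 - 1 \<noteq> (0 :: 'a fps)"
    using subdegree_fps_exp_minus_1[of "1::'a"] by force
  then show ?thesis
    unfolding bernoulli_egf_def
    by (rule fps_times_divide_eq) (subst subdegree_fps_exp_minus_1, simp_all)
qed

lemma bernoulli_egf_reflect_times_exp_minus_1:
  "(bernoulli_egf oo - fps_X) * (fps_exp 1 - 1) = fps_X * (fps_exp 1 :: 'a::field_char_0 fps)"
proof -
  let ?G = "bernoulli_egf oo - fps_X :: 'a fps"
  have reflected: "?G * (fps_exp (-1) - 1) = - fps_X"
    using arg_cong[OF bernoulli_egf_times_exp_minus_1, of "\<lambda>f. f oo - fps_X"]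
    by (simp add: fps_compose_mult_distrib fps_compose_sub_distrib)
  have "fps_exp (-1) * fps_exp 1 = (1 :: 'a fps)"
    by (simp flip: fps_exp_add_mult)
  then have "?G * (fps_exp 1 - 1) = - (?G * (fps_exp (-1) - 1) * fps_exp 1)"
    by (simp add: algebra_simps flip: mult.assoc)
  also have "\<dots> = fps_X * fps_exp 1"
    by (simp add: reflected)
  finally show ?thesis .
qed

lemma fps_nth_times_exp_minus_1:
  "fps_nth (f * (fps_exp 1 - 1)) m = (\<Sum>k<m. fps_nth f k / fact (m - k) :: 'a::field_char_0)"
  unfolding fps_mult_nth
  by (cases m) (auto simp: atLeast0AtMost lessThan_Suc_atMost[symmetric] intro!: sum.cong)

lemma bernoulli'_conv_egf: "bernoulli' k = fact k * fps_nth (bernoulli_egf oo - fps_X) k"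
  by (simp add: bernoulli'_def bernoulli_def bernoulli_egf_def fps_compose_uminus')

lemma sum_binomial_bernoulli': "(\<Sum>k<n. real (n choose k) * bernoulli' k) = real n"
proof -
  have "(\<Sum>k<n. fps_nth (bernoulli_egf oo - fps_X) k / fact (n - k)) =
        (fps_nth (fps_X * fps_exp 1) n :: real)"
    by (simp flip: fps_nth_times_exp_minus_1 bernoulli_egf_reflect_times_exp_minus_1)
  also have "\<dots> = real n / fact n"
    by (cases n) simp_all
  finally have "fact n * (\<Sum>k<n. fps_nth (bernoulli_egf oo - fps_X) k / fact (n - k)) = real n"
    by simp
  moreover have "fact n * (fps_nth (bernoulli_egf oo - fps_X) k / fact (n - k)) =
      real (n choose k) * bernoulli' k" if "k < n" for k
    using that by (simp add: bernoulli'_conv_egf binomial_fact field_simps)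
  ultimately show ?thesis
    by (simp add: sum_distrib_left)
qed

lemma bernoulli'_0 [simp]: "bernoulli' 0 = 1"
  using sum_binomial_bernoulli'[of 1] by simp

lemma sum_binomial_bernoulli'_atLeast1:
  "(\<Sum>j=1..n. real (Suc n choose j) * bernoulli' j) = real n"
proof -
  have "real (Suc n) = (\<Sum>j<Suc n. real (Suc n choose j) * bernoulli' j)"
    by (rule sum_binomial_bernoulli'[symmetric])
  also have "\<dots> = (\<Sum>j=0..n. real (Suc n choose j) * bernoulli' j)"
    by (simp only: atLeast0AtMost lessThan_Suc_atMost)
  also have "\<dots> = 1 + (\<Sum>j=1..n. real (Suc n choose j) * bernoulli' j)"
    by (simp add: sum.atLeast_Suc_atMost)
  finally show ?thesis
    by simp
qed

lemma binomial_Suc_diff_divide: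
  assumes "j \<ge> 1"
  shows "(real (Suc n choose j) - real (n choose j)) / real j = real (Suc n choose j) / real (Suc n)"
proof -
  obtain k where j: "j = Suc k"
    using assms by (cases j) auto
  have "real (Suc k) * real (Suc n choose Suc k) = real (Suc n) * real (n choose k)"
    using Suc_times_binomial[of k n] by (metis of_nat_mult)
  then show ?thesis
    unfolding j by (simp add: field_simps del: of_nat_Suc)
qed

lemma sum_binomial_minus_1_bernoulli'_Suc:
  "(\<Sum>j=1..Suc n. (real (Suc n choose j) - 1) * bernoulli' j / real j) =
   (\<Sum>j=1..n. (real (n choose j) - 1) * bernoulli' j / real j) + real n / real (Suc n)"
proof -
  have "(\<Sum>j=1..Suc n. (real (Suc n choose j) - 1) * bernoulli' j / real j) =
        (\<Sum>j=1..n. (real (Suc n choose j) - 1) * bernoulli' j / real j)"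
    by simp
  also have "\<dots> = (\<Sum>j=1..n. (real (n choose j) - 1) * bernoulli' j / real j
                      + real (Suc n choose j) * bernoulli' j / real (Suc n))"
  proof (rule sum.cong)
    fix j assume "j \<in> {1..n}"
    then have "j \<ge> 1"
      by simp
    then have "(real (Suc n choose j) - 1) * bernoulli' j / real j =
          (real (n choose j) - 1) * bernoulli' j / real j
          + bernoulli' j * ((real (Suc n choose j) - real (n choose j)) / real j)"
      by (simp add: field_simps)
    also have "\<dots> = (real (n choose j) - 1) * bernoulli' j / real j
          + real (Suc n choose j) * bernoulli' j / real (Suc n)"
      by (simp add: binomial_Suc_diff_divide[OF \<open>j \<ge> 1\<close>])
    finally show "(real (Suc n choose j) - 1) * bernoulli' j / real j =
        (real (n choose j) - 1) * bernoulli' j / real j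
        + real (Suc n choose j) * bernoulli' j / real (Suc n)" .
  qed simp
  also have "\<dots> = (\<Sum>j=1..n. (real (n choose j) - 1) * bernoulli' j / real j)
                   + real n / real (Suc n)"
    unfolding sum.distrib sum_divide_distrib[symmetric] sum_binomial_bernoulli'_atLeast1 ..
  finally show ?thesis .
qed

lemma sum_binomial_minus_1_bernoulli':
  "(\<Sum>j=1..n. (real (n choose j) - 1) * bernoulli' j / real j) = real n - harm n"
proof (induction n)
  case 0
  show ?case
    by (simp add: harm_def)
next
  case (Suc n)
  show ?case
    unfolding sum_binomial_minus_1_bernoulli'_Suc Suc.IH harm_Suc
    by (simp add: field_simps)
qed

theorem mainTheorem6:
  fixes n :: nat
  assumes "n \<ge> 1"
  shows "(\<Sum>j=1..n. (-1) ^ j * (real (n choose j) - 1) * bernoulli j / real j)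
           = real n - harm n"
proof -
  have "(\<Sum>j=1..n. (-1) ^ j * (real (n choose j) - 1) * bernoulli j / real j) =
        (\<Sum>j=1..n. (real (n choose j) - 1) * bernoulli' j / real j)"
    by (simp add: bernoulli'_def mult_ac)
  then show ?thesis
    by (simp only: sum_binomial_minus_1_bernoulli')
qed

end
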